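(* Assume $f(\cdot,u_t)$ is a diffeomorphism for all $t$ and that the relevant matrices are invertible. Consider (A) the pure fading-memory extended Kalman filter in the form $s_{t|t-1}=f(s_{t-1},u_t)$, $P_{t|t-1}=(1+\alpha_t)F_{t-1}P_{t-1}F_{t-1}^\top$, $\hat y_t=h(s_{t|t-1},u_t)$, $P_t^{-1}=P_{t|t-1}^{-1}+\mathcal I_t$, $s_t=s_{t|t-1}+P_t g_t^\top$; and (B) the recursion $s_{t|t-1}=f(s_{t-1},u_t)$, $\hat y_t=h(s_{t|t-1},u_t)$, $J_t=(1-\gamma_t)(F_{t-1}^{-1})^\top J_{t-1}F_{t-1}^{-1}+\gamma_t\mathcal I_t$, $s_t=s_{t|t-1}+\eta_tJ_t^{-1}g_t^\top$, where $F_{t-1}=\partial f/\partial s|_{(s_{t-1},u_t)}$, $g_t=\partial\ln p_{\mathrm{obs}}(y_t\mid h(s,u_t))/\partial s|_{s=s_{t|t-1}}$ and $\mathcal I_t=\mathbb E_{y\sim p_{\mathrm{obs}}(\cdot\mid\hat y_t)}[(\partial\ln p_{\mathrm{obs}}(y\mid h(s,u_t))/\partial s|_{s=s_{t|t-1}})^{\otimes2}]$. If the hyperparameters satisfy $\eta_t=\gamma_t$ and $\frac1{\eta_t}=\frac1{1+\alpha_t}\frac1{\eta_{t-1}}+1$ for $t\ge1$, and both are initialized at the same $s_0$ with $P_0=\eta_0J_0^{-1}$, then for all $t\ge0$ both produce the same $s_t$ and $P_t=\eta_tJ_t^{-1}$.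
   Context: Conventions: gradients of real functions are row vectors; for a row vector $v$, $v^{\otimes2}=v^\top v$. $p_{\mathrm{obs}}(y\mid\hat y)$ is an exponential family parameterized by its mean parameter $\hat y$; $f,h$ are smooth; $u_t$ are inputs, $y_t$ observations, $\alpha_t\ge0$ fading-memory weights, $\eta_t$ learning rates, $\gamma_t$ decay rates. *)

theory Defs
  imports "HOL-Analysis.Analysis"
begin

definition outer_sq :: "real^'n \<Rightarrow> real^'n^'n" where
  "outer_sq v = (\<chi> i j. v $ i * v $ j)"

definition exp_family_mean ::
  "'y measure \<Rightarrow> ('y \<Rightarrow> real^'m) \<Rightarrow> (real^'m) set \<Rightarrow> (real^'m \<Rightarrow> 'y \<Rightarrow> real) \<Rightarrow> bool" where
  "exp_family_mean \<mu> T \<Theta> p \<longleftrightarrow>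
     (\<exists>(\<theta> :: real^'m \<Rightarrow> real^'m) (A :: real^'m \<Rightarrow> real). \<forall>m\<in>\<Theta>.
        (\<forall>y\<in>space \<mu>. p m y = exp (\<theta> m \<bullet> T y - A m))
      \<and> integrable \<mu> (p m) \<and> (\<integral>y. p m y \<partial>\<mu>) = 1
      \<and> integrable \<mu> (\<lambda>y. p m y *\<^sub>R T y) \<and> (\<integral>y. p m y *\<^sub>R T y \<partial>\<mu>) = m)"

text \<open>Fisher information E_{y ~ p(.|h(s,u))}[(grad_s ln p(y|h(s,u)))^{\<otimes>2}], where
  G s u y is the gradient (as a vector) of s \<mapsto> ln p(y | h(s,u)).\<close>
definition fisher ::
  "'y measure \<Rightarrow> (real^'m \<Rightarrow> 'y \<Rightarrow> real) \<Rightarrow> (real^'n \<Rightarrow> 'u \<Rightarrow> real^'m)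
   \<Rightarrow> (real^'n \<Rightarrow> 'u \<Rightarrow> 'y \<Rightarrow> real^'n) \<Rightarrow> real^'n \<Rightarrow> 'u \<Rightarrow> real^'n^'n" where
  "fisher \<mu> p h G s u = (\<integral>y. p (h s u) y *\<^sub>R outer_sq (G s u y) \<partial>\<mu>)"

end

theory Submission imports Defs begin

text \<open>Recursion (A) is recursion (B) written in covariance instead of information form.
  If P(t-1) = \<eta>(t-1) J(t-1)\<inverse> and the states agree, the inverse of the predicted covariance
  (1 + \<alpha> t) F P(t-1) F^T is (F\<inverse>)^T J(t-1) F\<inverse> / ((1 + \<alpha> t) \<eta>(t-1)), and the hyperparameter
  recursion says exactly 1 - \<eta> t = \<eta> t / ((1 + \<alpha> t) \<eta>(t-1)); hence J t = \<eta> t P(t)\<inverse>.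
  The gains P t and \<eta> t J(t)\<inverse> then coincide, and so do the state updates.\<close>

lemma matrix_inv_right:
  fixes A :: "'a::semiring_1^'n^'m"
  assumes "invertible A"
  shows "A ** matrix_inv A = mat 1"
  using someI_ex[of "\<lambda>A'. A ** A' = mat 1 \<and> A' ** A = mat 1"] assms
  unfolding invertible_def matrix_inv_def by auto

lemma matrix_inv_left:
  fixes A :: "'a::semiring_1^'n^'m"
  assumes "invertible A"
  shows "matrix_inv A ** A = mat 1"
  using someI_ex[of "\<lambda>A'. A ** A' = mat 1 \<and> A' ** A = mat 1"] assms
  unfolding invertible_def matrix_inv_def by auto

lemma matrix_inv_unique:
  fixes A B :: "'a::field^'n^'n"
  assumes "A ** B = mat 1"
  shows "matrix_inv A = B"
proof -
  have A: "invertible A" using assms invertible_right_inverse by blast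
  have "matrix_inv A = matrix_inv A ** (A ** B)" using assms by simp
  also have "\<dots> = (matrix_inv A ** A) ** B" by (simp add: matrix_mul_assoc)
  finally show ?thesis by (simp add: matrix_inv_left[OF A])
qed

lemma matrix_inv_matrix_inv:
  fixes A :: "'a::field^'n^'n"
  assumes "invertible A"
  shows "matrix_inv (matrix_inv A) = A"
  by (rule matrix_inv_unique) (rule matrix_inv_left[OF assms])

lemma matrix_inv_scaleR:
  fixes A :: "real^'n^'n"
  assumes "invertible A" "c \<noteq> 0"
  shows "matrix_inv (c *\<^sub>R A) = (1 / c) *\<^sub>R matrix_inv A"
  by (rule matrix_inv_unique)
     (simp add: matrix_scalar_ac scalar_matrix_assoc[symmetric] matrix_inv_right[OF assms(1)] assms(2))

lemma invertible_mult_left_factor: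
  fixes A B :: "'a::field^'n^'n"
  assumes "invertible (A ** B)"
  shows "invertible A"
proof -
  obtain C where "A ** B ** C = mat 1" using assms invertible_right_inverse by blast
  then have "A ** (B ** C) = mat 1" by (simp add: matrix_mul_assoc)
  then show ?thesis using invertible_right_inverse by blast
qed

lemma matrix_inv_congruence:
  fixes F J :: "real^'n^'n"
  assumes F: "invertible F" and J: "invertible J" and "c \<noteq> 0"
  shows "matrix_inv (c *\<^sub>R (F ** matrix_inv J ** transpose F))
           = (1 / c) *\<^sub>R (transpose (matrix_inv F) ** J ** matrix_inv F)"
proof (rule matrix_inv_unique)
  have FT: "transpose F ** transpose (matrix_inv F) = mat 1"
    by (metis matrix_transpose_mul matrix_inv_left[OF F] transpose_mat)
  have "F ** matrix_inv J ** transpose F ** (transpose (matrix_inv F) ** J ** matrix_inv F)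
        = F ** (matrix_inv J ** ((transpose F ** transpose (matrix_inv F)) ** J)) ** matrix_inv F"
    by (simp add: matrix_mul_assoc)
  also have "\<dots> = mat 1"
    by (simp add: FT matrix_inv_left[OF J] matrix_inv_right[OF F])
  finally show "c *\<^sub>R (F ** matrix_inv J ** transpose F) ** ((1 / c) *\<^sub>R (transpose (matrix_inv F) ** J ** matrix_inv F))
                = mat 1"
    using \<open>c \<noteq> 0\<close> by (simp add: matrix_scalar_ac scalar_matrix_assoc[symmetric])
qed

lemma fading_memory_covariance_eq_information:
  fixes F J' I J P :: "real^'n^'n" and a e e' :: real
  assumes F: "invertible F" and J': "invertible J'" and P: "invertible P"
    and "a \<ge> 0" and "e > 0" and "e' > 0"
    and rec: "1 / e = 1 / (1 + a) * (1 / e') + 1"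
    and P_upd: "matrix_inv P = matrix_inv ((1 + a) *\<^sub>R (F ** (e' *\<^sub>R matrix_inv J') ** transpose F)) + I"
    and J_upd: "J = (1 - e) *\<^sub>R (transpose (matrix_inv F) ** J' ** matrix_inv F) + e *\<^sub>R I"
  shows "P = e *\<^sub>R matrix_inv J"
proof -
  define K where "K = transpose (matrix_inv F) ** J' ** matrix_inv F"
  have "(1 + a) *\<^sub>R (F ** (e' *\<^sub>R matrix_inv J') ** transpose F)
        = ((1 + a) * e') *\<^sub>R (F ** matrix_inv J' ** transpose F)"
    by (simp add: matrix_scalar_ac scalar_matrix_assoc[symmetric])
  then have "matrix_inv P = (1 / ((1 + a) * e')) *\<^sub>R K + I"
    using P_upd matrix_inv_congruence[OF F J', of "(1 + a) * e'"] \<open>a \<ge> 0\<close> \<open>e' > 0\<close>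
    by (simp add: K_def)
  moreover have "1 - e = e * (1 / ((1 + a) * e'))"
    using rec \<open>e > 0\<close> \<open>a \<ge> 0\<close> \<open>e' > 0\<close> by (simp add: field_simps)
  ultimately have J_eq: "J = e *\<^sub>R matrix_inv P"
    using J_upd by (simp add: K_def[symmetric] scaleR_add_right)
  have "invertible (matrix_inv P)"
    using matrix_inv_left[OF P] invertible_right_inverse by blast
  then have "matrix_inv J = (1 / e) *\<^sub>R P"
    using J_eq matrix_inv_scaleR[of "matrix_inv P" e] \<open>e > 0\<close> matrix_inv_matrix_inv[OF P] by simp
  then show ?thesis using \<open>e > 0\<close> by simp
qed

theorem proposition14:
  fixes f :: "real^'n \<Rightarrow> 'u \<Rightarrow> real^'n"
    and Fm :: "real^'n \<Rightarrow> 'u \<Rightarrow> real^'n^'n"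
    and h :: "real^'n \<Rightarrow> 'u \<Rightarrow> real^'m"
    and \<mu> :: "'y measure" and T :: "'y \<Rightarrow> real^'m" and \<Theta> :: "(real^'m) set"
    and p :: "real^'m \<Rightarrow> 'y \<Rightarrow> real"
    and G :: "real^'n \<Rightarrow> 'u \<Rightarrow> 'y \<Rightarrow> real^'n"
    and u :: "nat \<Rightarrow> 'u" and y :: "nat \<Rightarrow> 'y"
    and \<alpha> \<eta> \<gamma> :: "nat \<Rightarrow> real"
    and sA :: "nat \<Rightarrow> real^'n" and PA :: "nat \<Rightarrow> real^'n^'n"
    and sB :: "nat \<Rightarrow> real^'n" and J :: "nat \<Rightarrow> real^'n^'n"
  assumes expfam: "exp_family_mean \<mu> T \<Theta> p" and \<Theta>_open: "open \<Theta>"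
    and h_range: "\<And>s v. h s v \<in> \<Theta>"
    and f_deriv: "\<And>s v. ((\<lambda>s'. f s' v) has_derivative (\<lambda>w. Fm s v *v w)) (at s)"
    and f_diffeo: "\<And>v. \<exists>g. (\<forall>s. g (f s v) = s \<and> f (g s) v = s) \<and> (\<forall>s. g differentiable (at s))"
    and G_grad: "\<And>s v z. z \<in> space \<mu> \<Longrightarrow>
                   ((\<lambda>s'. ln (p (h s' v) z)) has_derivative (\<lambda>w. G s v z \<bullet> w)) (at s)"
    and y_space: "\<And>t. y t \<in> space \<mu>"
    and \<alpha>_nonneg: "\<And>t. \<alpha> t \<ge> 0"
    and \<eta>_pos: "\<And>t. \<eta> t > 0"
    and \<gamma>_eq: "\<And>t. t \<ge> 1 \<Longrightarrow> \<gamma> t = \<eta> t"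
    and \<eta>_rec: "\<And>t. t \<ge> 1 \<Longrightarrow> 1 / \<eta> t = 1 / (1 + \<alpha> t) * (1 / \<eta> (t - 1)) + 1"
    and init_s: "sA 0 = sB 0"
    and init_P: "PA 0 = \<eta> 0 *\<^sub>R matrix_inv (J 0)"
    and inv_PA: "\<And>t. invertible (PA t)"
    and inv_J: "\<And>t. invertible (J t)"
    and inv_Ppred: "\<And>t. t \<ge> 1 \<Longrightarrow>
          invertible ((1 + \<alpha> t) *\<^sub>R (Fm (sA (t - 1)) (u t) ** PA (t - 1) ** transpose (Fm (sA (t - 1)) (u t))))"
    \<comment> \<open>(A) pure fading-memory extended Kalman filter, t \<ge> 1\<close>
    and A_P: "\<And>t. t \<ge> 1 \<Longrightarrow>
          matrix_inv (PA t) =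
            matrix_inv ((1 + \<alpha> t) *\<^sub>R (Fm (sA (t - 1)) (u t) ** PA (t - 1) ** transpose (Fm (sA (t - 1)) (u t))))
            + fisher \<mu> p h G (f (sA (t - 1)) (u t)) (u t)"
    and A_s: "\<And>t. t \<ge> 1 \<Longrightarrow>
          sA t = f (sA (t - 1)) (u t) + PA t *v G (f (sA (t - 1)) (u t)) (u t) (y t)"
    \<comment> \<open>(B) natural-gradient-type recursion, t \<ge> 1\<close>
    and B_J: "\<And>t. t \<ge> 1 \<Longrightarrow>
          J t = (1 - \<gamma> t) *\<^sub>R (transpose (matrix_inv (Fm (sB (t - 1)) (u t))) ** J (t - 1)
                                  ** matrix_inv (Fm (sB (t - 1)) (u t)))
                + \<gamma> t *\<^sub>R fisher \<mu> p h G (f (sB (t - 1)) (u t)) (u t)"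
    and B_s: "\<And>t. t \<ge> 1 \<Longrightarrow>
          sB t = f (sB (t - 1)) (u t) + \<eta> t *\<^sub>R (matrix_inv (J t) *v G (f (sB (t - 1)) (u t)) (u t) (y t))"
  shows "\<forall>t. sA t = sB t \<and> PA t = \<eta> t *\<^sub>R matrix_inv (J t)"
proof
  fix t show "sA t = sB t \<and> PA t = \<eta> t *\<^sub>R matrix_inv (J t)"
  proof (induction t)
    case 0
    then show ?case using init_s init_P by simp
  next
    case (Suc n)
    let ?F = "Fm (sA n) (u (Suc n))"
    have "(1 + \<alpha> (Suc n)) *\<^sub>R (?F ** PA n ** transpose ?F)
          = ?F ** ((1 + \<alpha> (Suc n)) *\<^sub>R (PA n ** transpose ?F))"
      by (simp add: matrix_scalar_ac scalar_matrix_assoc matrix_mul_assoc)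
    then have "invertible (?F ** ((1 + \<alpha> (Suc n)) *\<^sub>R (PA n ** transpose ?F)))"
      using inv_Ppred[of "Suc n"] by simp
    then have "invertible ?F" by (rule invertible_mult_left_factor)
    then have P: "PA (Suc n) = \<eta> (Suc n) *\<^sub>R matrix_inv (J (Suc n))"
      using fading_memory_covariance_eq_information[OF _ inv_J inv_PA \<alpha>_nonneg \<eta>_pos \<eta>_pos]
        \<eta>_rec[of "Suc n"] A_P[of "Suc n"] B_J[of "Suc n"] \<gamma>_eq[of "Suc n"] Suc.IH
      by simp
    then have "sA (Suc n) = sB (Suc n)"
      using A_s[of "Suc n"] B_s[of "Suc n"] Suc.IH by (simp add: scaleR_matrix_vector_assoc)
    with P show ?case by simp
  qed
qed

end
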